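(* Consider the LSTM system $x_{k+1}=f(x_k,u_k)$, $y_k=g(x_k)$ described in the context, augmented with an output disturbance $d\in\mathbb{R}^p$ (so the output is $g(x)+d$). If $x_{k+1}=f(x_k,u_k)$ is Incrementally Input-to-State Stable ($\delta$ISS) in the sets $\mathcal{X}$ and $\mathcal{U}$, then for every $u\in\mathcal{U}$ and every $y\in\mathbb{R}^p$ there exist unique values $x^*\in\mathcal{X}$, $d^*\in\mathbb{R}^p$ such that $x^*=f(x^*,u)$ and $y=g(x^* )+d^*$.
   Context: LSTM model: states $c,h\in\mathbb{R}^n$, input $u\in\mathbb{R}^m$, output $y\in\mathbb{R}^p$, $c_{k+1}=\sigma(W_fu_k+U_fh_k+b_f)\circ c_k+\sigma(W_iu_k+U_ih_k+b_i)\circ\tanh(W_cu_k+U_ch_k+b_c)$, $h_{k+1}=\sigma(W_ou_k+U_oh_k+b_o)\circ\tanh(c_{k+1})$, $y_k=W_yh_k+b_y$, where $\sigma$ is the logistic sigmoid, activations act elementwise, $\circ$ is the elementwise product; $x=[c^\top\ h^\top]^\top$, written $x_{k+1}=f(x_k,u_k)$, $y_k=g(x_k)$. $\delta$ISS: given $\mathcal{X}\subseteq\mathbb{R}^{2n}$ positively invariant (for every $u\in\mathcal{U}$, $x\in\mathcal{X}\Rightarrow f(x,u)\in\mathcal{X}$) and $\mathcal{U}\subseteq\mathbb{R}^m$, the system is $\delta$ISS in $\mathcal{X},\mathcal{U}$ if there exist $\beta\in\mathcal{KL}$, $\gamma\in\mathcal{K}_\infty$ such that for all $k\ge0$, all $x_{a,0},x_{b,0}\in\mathcal{X}$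 and all input sequences in $\mathcal{U}$, $\|x_{a,k}-x_{b,k}\|\le\beta(\|x_{a,0}-x_{b,0}\|,k)+\gamma(\max_{0\le h<k}\|u_{a,h}-u_{b,h}\|)$.
   Formalization: The set $\mathcal{X}$ is further assumed to be nonempty and closed in $\mathbb{R}^{2n}$. The statement above fails without it. *)

theory Defs
  imports "HOL-Analysis.Analysis"
begin

record ('n::finite, 'm::finite, 'p::finite) lstm =
  Wf :: "real^'m^'n"  Uf :: "real^'n^'n"  bf :: "real^'n"
  Wi :: "real^'m^'n"  Ui :: "real^'n^'n"  bi :: "real^'n"
  Wc :: "real^'m^'n"  Uc :: "real^'n^'n"  bc :: "real^'n"
  Wo :: "real^'m^'n"  Uo :: "real^'n^'n"  bo :: "real^'n"
  Wy :: "real^'n^'p"  b_y :: "real^'p"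

definition sigmoid :: "real \<Rightarrow> real" where
  "sigmoid t = 1 / (1 + exp (- t))"

definition vsig :: "real^'n \<Rightarrow> real^'n" where
  "vsig v = (\<chi> i. sigmoid (v $ i))"

definition vtanh :: "real^'n \<Rightarrow> real^'n" where
  "vtanh v = (\<chi> i. tanh (v $ i))"

definition hadamard :: "real^'n \<Rightarrow> real^'n \<Rightarrow> real^'n" (infixl "\<circ>\<^sub>h" 70) where
  "a \<circ>\<^sub>h b = (\<chi> i. a $ i * b $ i)"

text \<open>State x = (c, h); the norm on pairs is the Euclidean norm of the stacked vector.\<close>
definition lstm_c_next :: "('n::finite,'m::finite,'p::finite) lstm \<Rightarrow> (real^'n) \<times> (real^'n) \<Rightarrow> real^'m \<Rightarrow> real^'n" where
  "lstm_c_next P x u =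
     vsig (Wf P *v u + Uf P *v snd x + bf P) \<circ>\<^sub>h fst x
   + vsig (Wi P *v u + Ui P *v snd x + bi P) \<circ>\<^sub>h vtanh (Wc P *v u + Uc P *v snd x + bc P)"

definition lstm_f :: "('n::finite,'m::finite,'p::finite) lstm \<Rightarrow> (real^'n) \<times> (real^'n) \<Rightarrow> real^'m \<Rightarrow> (real^'n) \<times> (real^'n)" where
  "lstm_f P x u =
     (lstm_c_next P x u,
      vsig (Wo P *v u + Uo P *v snd x + bo P) \<circ>\<^sub>h vtanh (lstm_c_next P x u))"

definition lstm_g :: "('n::finite,'m::finite,'p::finite) lstm \<Rightarrow> (real^'n) \<times> (real^'n) \<Rightarrow> real^'p" where
  "lstm_g P x = Wy P *v snd x + b_y P"

primrec traj :: "('n::finite,'m::finite,'p::finite) lstm \<Rightarrow> (real^'n) \<times> (real^'n) \<Rightarrow> (nat \<Rightarrow> real^'m) \<Rightarrow> nat \<Rightarrow> (real^'n) \<times> (real^'n)" where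
  "traj P x0 u 0 = x0"
| "traj P x0 u (Suc k) = lstm_f P (traj P x0 u k) (u k)"

definition classK :: "(real \<Rightarrow> real) \<Rightarrow> bool" where
  "classK \<alpha> \<longleftrightarrow> continuous_on {0..} \<alpha> \<and> strict_mono_on {0..} \<alpha> \<and> \<alpha> 0 = 0"

definition classKinf :: "(real \<Rightarrow> real) \<Rightarrow> bool" where
  "classKinf \<alpha> \<longleftrightarrow> classK \<alpha> \<and> filterlim \<alpha> at_top at_top"

definition classKL :: "(real \<Rightarrow> nat \<Rightarrow> real) \<Rightarrow> bool" where
  "classKL \<beta> \<longleftrightarrow> (\<forall>k. classK (\<lambda>r. \<beta> r k)) \<and>
     (\<forall>r\<ge>0. antimono (\<beta> r) \<and> (\<beta> r \<longlonglongrightarrow> 0))"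

definition pos_invariant :: "('n::finite,'m::finite,'p::finite) lstm \<Rightarrow> ((real^'n) \<times> (real^'n)) set \<Rightarrow> (real^'m) set \<Rightarrow> bool" where
  "pos_invariant P X U \<longleftrightarrow> (\<forall>x\<in>X. \<forall>u\<in>U. lstm_f P x u \<in> X)"

text \<open>The maximum over the empty index range (k = 0) is taken as 0; norms are nonnegative,
  so inserting 0 does not change the maximum otherwise.\<close>
definition deltaISS :: "('n::finite,'m::finite,'p::finite) lstm \<Rightarrow> ((real^'n) \<times> (real^'n)) set \<Rightarrow> (real^'m) set \<Rightarrow> bool" where
  "deltaISS P X U \<longleftrightarrow> (\<exists>\<beta> \<gamma>. classKL \<beta> \<and> classKinf \<gamma> \<and>
     (\<forall>k xa0 xb0 ua ub. xa0 \<in> X \<longrightarrow> xb0 \<in> X \<longrightarrow> (\<forall>h. ua h \<in> U) \<longrightarrow> (\<forall>h. ub h \<in> U) \<longrightarrow>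
        norm (traj P xa0 ua k - traj P xb0 ub k)
          \<le> \<beta> (norm (xa0 - xb0)) k + \<gamma> (Max (insert 0 ((\<lambda>h. norm (ua h - ub h)) ` {..<k})))))"

end

theory Submission
  imports Defs
begin

text \<open>Feeding the same constant input u to both trajectories removes the \<gamma>-term from the
  \<delta>ISS estimate, so any two orbits of F = f(\<cdot>, u) in X satisfy
  |F^k a - F^k b| \<le> \<beta>(|a - b|, k) \<rightarrow> 0; hence two fixed points in X coincide.
  For existence, compare an orbit x_k with its shift x_{k+j}: their distance at time m is at most
  \<beta>(|x_j - x_0|, m), which is uniformly small in j once the orbit is bounded. LSTM orbits are
  bounded because h stays in [-1, 1]^n, so the forget gate is bounded away from 1 and c obeys
  |c'| \<le> s|c| + 1 with s < 1. The Cauchy orbit converges in the closed set X to a fixed point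
  of the continuous map F, and d* is then forced to be y - g(x*).\<close>

lemma classKL_mono:
  assumes "classKL \<beta>" "0 \<le> r" "r \<le> r'"
  shows "\<beta> r k \<le> \<beta> r' k"
proof -
  have "strict_mono_on {0..} (\<lambda>r. \<beta> r k)"
    using assms(1) unfolding classKL_def classK_def by blast
  then show ?thesis by (rule strict_mono_on_leD) (use assms in auto)
qed

lemma classKL_tendsto_0: "classKL \<beta> \<Longrightarrow> 0 \<le> r \<Longrightarrow> \<beta> r \<longlonglongrightarrow> 0"
  unfolding classKL_def by blast

lemma funpow_in_invariant: "x \<in> X \<Longrightarrow> \<forall>x\<in>X. F x \<in> X \<Longrightarrow> (F ^^ k) x \<in> X"
  by (induction k) auto

lemma funpow_fixed_point: "F x = x \<Longrightarrow> (F ^^ k) x = x"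
  by (induction k) auto

lemma incrementally_stable_fixed_point_unique:
  fixes F :: "'a::metric_space \<Rightarrow> 'a"
  assumes KL: "classKL \<beta>"
    and stable: "\<forall>a\<in>X. \<forall>b\<in>X. \<forall>k. dist ((F ^^ k) a) ((F ^^ k) b) \<le> \<beta> (dist a b) k"
    and "a \<in> X" "b \<in> X" "F a = a" "F b = b"
  shows "a = b"
proof -
  have "dist ((F ^^ k) a) ((F ^^ k) b) \<le> \<beta> (dist a b) k" for k
    using stable \<open>a \<in> X\<close> \<open>b \<in> X\<close> by blast
  then have "dist a b \<le> \<beta> (dist a b) k" for k
    by (simp add: funpow_fixed_point \<open>F a = a\<close> \<open>F b = b\<close>)
  then have "dist a b \<le> 0"
    using LIMSEQ_le_const[OF classKL_tendsto_0[OF KL zero_le_dist]] by blast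
  then show ?thesis by simp
qed

lemma incrementally_stable_bounded_orbit_Cauchy:
  fixes F :: "'a::metric_space \<Rightarrow> 'a"
  assumes KL: "classKL \<beta>"
    and stable: "\<forall>a\<in>X. \<forall>b\<in>X. \<forall>k. dist ((F ^^ k) a) ((F ^^ k) b) \<le> \<beta> (dist a b) k"
    and invariant: "\<forall>x\<in>X. F x \<in> X" and "x0 \<in> X"
    and bounded: "bounded (range (\<lambda>k. (F ^^ k) x0))"
  shows "Cauchy (\<lambda>k. (F ^^ k) x0)"
proof (rule metric_CauchyI)
  fix e :: real
  assume "e > 0"
  obtain D where "\<forall>y\<in>range (\<lambda>k. (F ^^ k) x0). dist x0 y \<le> D"
    using bounded unfolding bounded_any_center[where a = x0] by blast
  then have D: "dist ((F ^^ j) x0) x0 \<le> D" for j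
    by (simp add: dist_commute)
  then have "0 \<le> D" by (rule order_trans[OF zero_le_dist])
  then obtain N where N: "\<And>m. m \<ge> N \<Longrightarrow> \<beta> D m < e"
    using order_tendstoD(2)[OF classKL_tendsto_0[OF KL] \<open>e > 0\<close>]
    unfolding eventually_sequentially by blast
  have shifted: "dist ((F ^^ (m + j)) x0) ((F ^^ m) x0) < e" if "m \<ge> N" for m j
  proof -
    have "dist ((F ^^ (m + j)) x0) ((F ^^ m) x0) = dist ((F ^^ m) ((F ^^ j) x0)) ((F ^^ m) x0)"
      by (simp add: funpow_add)
    also have "\<dots> \<le> \<beta> (dist ((F ^^ j) x0) x0) m"
      using stable funpow_in_invariant[OF \<open>x0 \<in> X\<close> invariant] \<open>x0 \<in> X\<close> by blast
    also have "\<dots> \<le> \<beta> D m"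
      using classKL_mono[OF KL zero_le_dist D] .
    also have "\<dots> < e" using N that .
    finally show ?thesis .
  qed
  show "\<exists>N. \<forall>m\<ge>N. \<forall>n\<ge>N. dist ((F ^^ m) x0) ((F ^^ n) x0) < e"
  proof (intro exI allI impI)
    fix m n assume "N \<le> m" "N \<le> n"
    show "dist ((F ^^ m) x0) ((F ^^ n) x0) < e"
    proof (cases "m \<le> n")
      case True
      then show ?thesis using shifted[OF \<open>N \<le> m\<close>, of "n - m"] by (simp add: dist_commute)
    next
      case False
      then show ?thesis using shifted[OF \<open>N \<le> n\<close>, of "m - n"] by simp
    qed
  qed
qed

lemma incrementally_stable_fixed_point:
  fixes F :: "'a::complete_space \<Rightarrow> 'a"
  assumes KL: "classKL \<beta>"
    and stable: "\<forall>a\<in>X. \<forall>b\<in>X. \<forall>k. dist ((F ^^ k) a) ((F ^^ k) b) \<le> \<beta> (dist a b) k"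
    and invariant: "\<forall>x\<in>X. F x \<in> X" and "closed X" and "continuous_on X F" and "x0 \<in> X"
    and bounded: "bounded (range (\<lambda>k. (F ^^ k) x0))"
  shows "\<exists>!x. x \<in> X \<and> F x = x"
proof -
  let ?x = "\<lambda>k. (F ^^ k) x0"
  have orbit_in_X: "?x k \<in> X" for k
    using funpow_in_invariant[OF \<open>x0 \<in> X\<close> invariant] .
  have "convergent ?x"
    using Cauchy_convergent[OF incrementally_stable_bounded_orbit_Cauchy[OF assms(1-3,6-7)]] .
  then obtain L where L: "?x \<longlonglongrightarrow> L"
    unfolding convergent_def by blast
  have "L \<in> X" using closed_sequentially[OF \<open>closed X\<close> orbit_in_X L] .
  have "(\<lambda>k. F (?x k)) \<longlonglongrightarrow> F L"
    using continuous_on_tendsto_compose[OF \<open>continuous_on X F\<close> L \<open>L \<in> X\<close>] orbit_in_X by simp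
  moreover have "(\<lambda>k. F (?x k)) \<longlonglongrightarrow> L"
    using LIMSEQ_Suc[OF L] by simp
  ultimately have "F L = L" by (rule LIMSEQ_unique)
  with \<open>L \<in> X\<close> show ?thesis
    using incrementally_stable_fixed_point_unique[OF KL stable _ \<open>L \<in> X\<close> _ \<open>F L = L\<close>] by blast
qed

lemma bounded_by_affine_contraction:
  fixes a :: "nat \<Rightarrow> real"
  assumes "0 \<le> s" "s < 1" and step: "\<And>k. a (Suc k) \<le> s * a k + 1"
  shows "a k \<le> max (a 0) (1 / (1 - s))"
proof (induction k)
  case 0
  show ?case by simp
next
  case (Suc k)
  let ?M = "max (a 0) (1 / (1 - s))"
  have "1 \<le> (1 - s) * ?M"
    using assms(2) by (simp add: field_simps max_def)
  then have "s * ?M + 1 \<le> ?M" by (simp add: algebra_simps)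
  moreover have "s * a k \<le> s * ?M" using Suc.IH assms(1) by (rule mult_left_mono)
  ultimately show ?case using step[of k] by linarith
qed

lemma sigmoid_pos: "0 < sigmoid t"
  unfolding sigmoid_def by (simp add: add_pos_pos)

lemma sigmoid_less_1: "sigmoid t < 1"
  unfolding sigmoid_def by (simp add: add_pos_pos)

lemma sigmoid_mono: "s \<le> t \<Longrightarrow> sigmoid s \<le> sigmoid t"
  unfolding sigmoid_def by (simp add: frac_le add_pos_pos)

lemma abs_sigmoid_mult_tanh_le_1: "\<bar>sigmoid s * tanh t\<bar> \<le> 1"
proof -
  have "\<bar>sigmoid s\<bar> \<le> 1" "\<bar>tanh t\<bar> \<le> 1"
    using sigmoid_pos[of s] sigmoid_less_1[of s] tanh_real_bounds[of t] by auto
  then show ?thesis unfolding abs_mult by (metis abs_ge_zero mult_le_one)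
qed

lemma continuous_on_vsig [continuous_intros]:
  "continuous_on S f \<Longrightarrow> continuous_on S (\<lambda>x. vsig (f x))"
  unfolding vsig_def sigmoid_def
  by (intro continuous_intros) (auto simp: add_nonneg_eq_0_iff)

lemma continuous_on_vtanh [continuous_intros]:
  "continuous_on S f \<Longrightarrow> continuous_on S (\<lambda>x. vtanh (f x))"
  unfolding vtanh_def by (intro continuous_intros) auto

lemma continuous_on_hadamard [continuous_intros]:
  "continuous_on S f \<Longrightarrow> continuous_on S g \<Longrightarrow> continuous_on S (\<lambda>x. f x \<circ>\<^sub>h g x)"
  unfolding hadamard_def by (intro continuous_intros)

lemma continuous_on_matrix_vector_mult [continuous_intros]:
  fixes A :: "real^'n^'m"
  shows "continuous_on S f \<Longrightarrow> continuous_on S (\<lambda>x. A *v f x)"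
  by (rule bounded_linear.continuous_on[OF matrix_vector_mul_bounded_linear])

lemma continuous_on_lstm_f: "continuous_on S (\<lambda>x. lstm_f P x u)"
  unfolding lstm_f_def lstm_c_next_def by (intro continuous_intros)

lemma lstm_hidden_in_unit_box: "snd (lstm_f P x u) \<in> cbox (-1) 1"
proof -
  have "\<bar>snd (lstm_f P x u) $ i\<bar> \<le> 1" for i
    by (simp add: lstm_f_def hadamard_def vsig_def vtanh_def abs_sigmoid_mult_tanh_le_1)
  then show ?thesis unfolding mem_box_cart by (simp add: abs_le_iff)
qed

lemma lstm_forget_gate_uniformly_less_1:
  "\<exists>s. 0 \<le> s \<and> s < 1 \<and>
     (\<forall>h\<in>cbox (-1) 1. \<forall>i. sigmoid ((Wf P *v u + Uf P *v h + bf P) $ i) \<le> s)"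
proof -
  have "bounded ((\<lambda>h. Wf P *v u + Uf P *v h + bf P) ` cbox (-1) 1)"
    by (intro compact_imp_bounded compact_continuous_image continuous_intros compact_cbox)
  then obtain A where A: "\<forall>h\<in>cbox (-1) 1. norm (Wf P *v u + Uf P *v h + bf P) \<le> A"
    unfolding bounded_iff by blast
  have "sigmoid ((Wf P *v u + Uf P *v h + bf P) $ i) \<le> sigmoid A" if "h \<in> cbox (-1) 1" for h i
  proof (rule sigmoid_mono)
    have "(Wf P *v u + Uf P *v h + bf P) $ i \<le> norm (Wf P *v u + Uf P *v h + bf P)"
      by (rule order_trans[OF abs_ge_self component_le_norm_cart])
    also have "\<dots> \<le> A" using A that by blast
    finally show "(Wf P *v u + Uf P *v h + bf P) $ i \<le> A" .
  qed
  moreover have "0 \<le> sigmoid A" "sigmoid A < 1"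
    using sigmoid_pos[of A] sigmoid_less_1[of A] by simp_all
  ultimately show ?thesis by blast
qed

lemma lstm_cell_affine_bound:
  assumes forget: "\<forall>h\<in>cbox (-1) 1. \<forall>i. sigmoid ((Wf P *v u + Uf P *v h + bf P) $ i) \<le> s"
    and "snd x \<in> cbox (-1) 1"
  shows "\<bar>fst (lstm_f P x u) $ i\<bar> \<le> s * \<bar>fst x $ i\<bar> + 1"
proof -
  define f where "f = sigmoid ((Wf P *v u + Uf P *v snd x + bf P) $ i)"
  define g where "g = sigmoid ((Wi P *v u + Ui P *v snd x + bi P) $ i) *
                      tanh ((Wc P *v u + Uc P *v snd x + bc P) $ i)"
  have "fst (lstm_f P x u) $ i = f * fst x $ i + g"
    by (simp add: lstm_f_def lstm_c_next_def hadamard_def vsig_def vtanh_def f_def g_def)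
  moreover have "\<bar>f * fst x $ i\<bar> \<le> s * \<bar>fst x $ i\<bar>"
  proof -
    have "0 < f" "f \<le> s" using forget assms(2) sigmoid_pos unfolding f_def by blast+
    then show ?thesis by (simp add: abs_mult mult_right_mono)
  qed
  moreover have "\<bar>g\<bar> \<le> 1" unfolding g_def by (rule abs_sigmoid_mult_tanh_le_1)
  ultimately show ?thesis by linarith
qed

lemma lstm_orbit_bounded: "bounded (range (\<lambda>k. ((\<lambda>x. lstm_f P x u) ^^ k) x0))"
proof -
  let ?F = "\<lambda>x. lstm_f P x u"
  obtain s where s: "0 \<le> s" "s < 1"
    and forget: "\<forall>h\<in>cbox (-1) 1. \<forall>i. sigmoid ((Wf P *v u + Uf P *v h + bf P) $ i) \<le> s"
    using lstm_forget_gate_uniformly_less_1 by blast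
  define c where "c k = fst ((?F ^^ Suc k) x0)" for k
  define R where "R = max (norm (c 0)) (1 / (1 - s))"
  have hidden: "snd ((?F ^^ Suc k) x0) \<in> cbox (-1) 1" for k
    by (simp add: lstm_hidden_in_unit_box)
  have cell: "\<bar>c k $ i\<bar> \<le> R" for k i
  proof -
    have "\<bar>c k $ i\<bar> \<le> max \<bar>c 0 $ i\<bar> (1 / (1 - s))"
      using s lstm_cell_affine_bound[OF forget hidden]
      by (intro bounded_by_affine_contraction) (simp_all add: c_def)
    then show ?thesis
      using component_le_norm_cart[of "c 0" i] unfolding R_def by linarith
  qed
  have "(?F ^^ Suc k) x0 \<in> cbox (- vec R) (vec R) \<times> cbox (-1) 1" for k
    using cell[of k] hidden[of k] unfolding mem_Times_iff mem_box_cart c_def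
    by (simp add: abs_le_iff del: funpow.simps) (meson minus_le_iff)
  then have "range (\<lambda>k. (?F ^^ Suc k) x0) \<subseteq> cbox (- vec R) (vec R) \<times> cbox (-1) 1"
    by blast
  then have "bounded (range (\<lambda>k. (?F ^^ Suc k) x0))"
    by (rule bounded_subset[OF bounded_Times[OF bounded_cbox bounded_cbox]])
  moreover have "range (\<lambda>k. (?F ^^ k) x0) \<subseteq> insert x0 (range (\<lambda>k. (?F ^^ Suc k) x0))"
  proof
    fix z assume "z \<in> range (\<lambda>k. (?F ^^ k) x0)"
    then obtain k where "z = (?F ^^ k) x0" by blast
    then show "z \<in> insert x0 (range (\<lambda>k. (?F ^^ Suc k) x0))"
      by (cases k) (auto simp del: funpow.simps)
  qed
  ultimately show ?thesis using bounded_subset bounded_insert by blast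
qed

lemma traj_constant_input: "traj P x0 (\<lambda>_. u) k = ((\<lambda>x. lstm_f P x u) ^^ k) x0"
  by (induction k) auto

lemma deltaISS_constant_input:
  assumes "deltaISS P X U" "u \<in> U"
  shows "\<exists>\<beta>. classKL \<beta> \<and> (\<forall>a\<in>X. \<forall>b\<in>X. \<forall>k.
    dist (((\<lambda>x. lstm_f P x u) ^^ k) a) (((\<lambda>x. lstm_f P x u) ^^ k) b) \<le> \<beta> (dist a b) k)"
proof -
  obtain \<beta> \<gamma> where "classKL \<beta>" "classKinf \<gamma>" and iss:
    "\<And>k a b ua ub. a \<in> X \<Longrightarrow> b \<in> X \<Longrightarrow> (\<forall>h. ua h \<in> U) \<Longrightarrow> (\<forall>h. ub h \<in> U) \<Longrightarrow>
       norm (traj P a ua k - traj P b ub k)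
       \<le> \<beta> (norm (a - b)) k + \<gamma> (Max (insert 0 ((\<lambda>h. norm (ua h - ub h)) ` {..<k})))"
    using assms(1) unfolding deltaISS_def by blast
  have "\<gamma> 0 = 0" using \<open>classKinf \<gamma>\<close> unfolding classKinf_def classK_def by blast
  moreover have "Max (insert 0 ((\<lambda>h. norm (u - u)) ` {..<k})) = (0::real)" for k :: nat
    by (cases "k = 0") (auto simp: image_constant_conv)
  ultimately have "norm (traj P a (\<lambda>_. u) k - traj P b (\<lambda>_. u) k) \<le> \<beta> (norm (a - b)) k"
    if "a \<in> X" "b \<in> X" for a b k
    using iss[OF that, of "\<lambda>_. u" "\<lambda>_. u" k] \<open>u \<in> U\<close> by simp
  then show ?thesis
    using \<open>classKL \<beta>\<close> unfolding dist_norm traj_constant_input[symmetric] by blast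
qed

theorem lemma2:
  fixes P :: "('n::finite,'m::finite,'p::finite) lstm"
    and X :: "((real^'n) \<times> (real^'n)) set" and U :: "(real^'m) set"
  assumes "X \<noteq> {}" and "closed X"
    and "pos_invariant P X U"
    and "deltaISS P X U"
  shows "\<forall>u\<in>U. \<forall>y::real^'p. \<exists>!(xs, ds). xs \<in> X \<and> xs = lstm_f P xs u \<and> y = lstm_g P xs + ds"
proof (intro ballI allI)
  fix u y
  assume "u \<in> U"
  obtain \<beta> where KL: "classKL \<beta>" and stable: "\<forall>a\<in>X. \<forall>b\<in>X. \<forall>k.
    dist (((\<lambda>x. lstm_f P x u) ^^ k) a) (((\<lambda>x. lstm_f P x u) ^^ k) b) \<le> \<beta> (dist a b) k"
    using deltaISS_constant_input[OF assms(4) \<open>u \<in> U\<close>] by blast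
  obtain x0 where "x0 \<in> X" using assms(1) by blast
  have invariant: "\<forall>x\<in>X. lstm_f P x u \<in> X"
    using assms(3) \<open>u \<in> U\<close> unfolding pos_invariant_def by blast
  obtain xs where "xs \<in> X" "lstm_f P xs u = xs"
    and unique: "\<And>x. x \<in> X \<Longrightarrow> lstm_f P x u = x \<Longrightarrow> x = xs"
    using incrementally_stable_fixed_point[OF KL stable invariant assms(2)
        continuous_on_lstm_f \<open>x0 \<in> X\<close> lstm_orbit_bounded] by blast
  show "\<exists>!(xs, ds). xs \<in> X \<and> xs = lstm_f P xs u \<and> y = lstm_g P xs + ds"
  proof (rule ex1I[of _ "(xs, y - lstm_g P xs)"])
    show "case (xs, y - lstm_g P xs) of (xs', ds) \<Rightarrow>
            xs' \<in> X \<and> xs' = lstm_f P xs' u \<and> y = lstm_g P xs' + ds"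
      using \<open>xs \<in> X\<close> \<open>lstm_f P xs u = xs\<close> by simp
  qed (use unique in auto)
qed

end
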